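(* Let $H=(V,E)$ be a hypergraph with at least $3$ edges and let $L=\mathcal L(H)$ be its intersection graph. (1) If $H$ is eulerian, then $L$ has a Hamilton cycle. (2) If $H$ is quasi-eulerian, then $L$ has a spanning subgraph each of whose connected components is $1$-regular or $2$-regular. (3) If $H$ has an Euler family containing no closed strict trail of length less than $3$, then $L$ has a $2$-factor.
   Context: A hypergraph $H=(V,E)$ consists of a finite nonempty vertex set $V$, a finite edge set $E$ disjoint from $V$, and an incidence function assigning to each edge $e\in E$ a subset of $V$ (also denoted $e$); distinct edges may have the same vertex set. Hypergraphs are assumed to have no empty edges. A walk of length $k$ is a sequence $W=v_0e_1v_1e_2\cdots e_kv_k$ with $v_i\in V$, $e_i\in E$, such that for each $i$, $v_{i-1}\ne v_i$ and $v_{i-1},v_i\in e_i$; the $v_i$ are its anchors. $W$ is closed if $k\ge 2$ and $v_0=v_k$; it is a strict trail if $e_1,\dots,e_k$ are pairwise distinct. An Euler tour of $H$ is a closed strict trail traversing every edge of $H$; an Euler family of $H$ is a family of closed strict trails such that every edge of $H$ lies in exactly one trail and no two trails have a common anchor. $H$ is eulerian (quasi-eulerian) if it has an Euler tour (Euler family). The intersection graph $\mathcal L(H)$ is the simple graph with vertex set $E$ in which distinct $e,e'$ are adjacent iff $e\cap e'\ne\emptyset$. *)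

theory Defs
  imports Main
begin

text \<open>A hypergraph: vertex set V, edge set E (edges of a separate type, hence disjoint
from V), incidence function inc; finite, V nonempty, no empty edges.\<close>
definition hypergraph :: "'v set \<Rightarrow> 'e set \<Rightarrow> ('e \<Rightarrow> 'v set) \<Rightarrow> bool" where
  "hypergraph V E inc \<longleftrightarrow> finite V \<and> V \<noteq> {} \<and> finite E \<and>
     (\<forall>e\<in>E. inc e \<subseteq> V \<and> inc e \<noteq> {})"

text \<open>A walk v0 e1 v1 ... ek vk is represented by the anchor list vs = [v0,...,vk]
and the edge list es = [e1,...,ek]; its length is length es.\<close>
definition hwalk :: "'v set \<Rightarrow> 'e set \<Rightarrow> ('e \<Rightarrow> 'v set) \<Rightarrow> 'v list \<Rightarrow> 'e list \<Rightarrow> bool" where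
  "hwalk V E inc vs es \<longleftrightarrow> length vs = length es + 1 \<and> set vs \<subseteq> V \<and>
     (\<forall>i < length es. es ! i \<in> E \<and> vs ! i \<noteq> vs ! (Suc i) \<and>
        vs ! i \<in> inc (es ! i) \<and> vs ! (Suc i) \<in> inc (es ! i))"

definition closed_strict_trail :: "'v set \<Rightarrow> 'e set \<Rightarrow> ('e \<Rightarrow> 'v set) \<Rightarrow> 'v list \<Rightarrow> 'e list \<Rightarrow> bool" where
  "closed_strict_trail V E inc vs es \<longleftrightarrow> hwalk V E inc vs es \<and> length es \<ge> 2 \<and>
     hd vs = last vs \<and> distinct es"

definition euler_tour :: "'v set \<Rightarrow> 'e set \<Rightarrow> ('e \<Rightarrow> 'v set) \<Rightarrow> 'v list \<Rightarrow> 'e list \<Rightarrow> bool" where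
  "euler_tour V E inc vs es \<longleftrightarrow> closed_strict_trail V E inc vs es \<and> set es = E"

definition eulerian :: "'v set \<Rightarrow> 'e set \<Rightarrow> ('e \<Rightarrow> 'v set) \<Rightarrow> bool" where
  "eulerian V E inc \<longleftrightarrow> (\<exists>vs es. euler_tour V E inc vs es)"

definition euler_family :: "'v set \<Rightarrow> 'e set \<Rightarrow> ('e \<Rightarrow> 'v set) \<Rightarrow> ('v list \<times> 'e list) set \<Rightarrow> bool" where
  "euler_family V E inc F \<longleftrightarrow>
     (\<forall>T\<in>F. closed_strict_trail V E inc (fst T) (snd T)) \<and>
     (\<forall>e\<in>E. \<exists>!T. T \<in> F \<and> e \<in> set (snd T)) \<and>
     (\<forall>T\<in>F. \<forall>T'\<in>F. T \<noteq> T' \<longrightarrow> set (fst T) \<inter> set (fst T') = {})"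

definition quasi_eulerian :: "'v set \<Rightarrow> 'e set \<Rightarrow> ('e \<Rightarrow> 'v set) \<Rightarrow> bool" where
  "quasi_eulerian V E inc \<longleftrightarrow> (\<exists>F. euler_family V E inc F)"

text \<open>Intersection graph: vertex set E, adjacency relation.\<close>
definition inter_adj :: "('e \<Rightarrow> 'v set) \<Rightarrow> 'e \<Rightarrow> 'e \<Rightarrow> bool" where
  "inter_adj inc e e' \<longleftrightarrow> e \<noteq> e' \<and> inc e \<inter> inc e' \<noteq> {}"

text \<open>Simple graphs are given by a vertex set S and a symmetric irreflexive adjacency A.\<close>
definition hamilton_cycle :: "'a set \<Rightarrow> ('a \<Rightarrow> 'a \<Rightarrow> bool) \<Rightarrow> 'a list \<Rightarrow> bool" where
  "hamilton_cycle S A cs \<longleftrightarrow> length cs \<ge> 3 \<and> distinct cs \<and> set cs = S \<and>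
     (\<forall>i. Suc i < length cs \<longrightarrow> A (cs ! i) (cs ! Suc i)) \<and> A (last cs) (hd cs)"

definition spanning_subgraph :: "'a set \<Rightarrow> ('a \<Rightarrow> 'a \<Rightarrow> bool) \<Rightarrow> ('a \<Rightarrow> 'a \<Rightarrow> bool) \<Rightarrow> bool" where
  "spanning_subgraph S A F \<longleftrightarrow>
     (\<forall>x y. F x y \<longrightarrow> x \<in> S \<and> y \<in> S \<and> A x y) \<and> (\<forall>x y. F x y \<longrightarrow> F y x)"

definition deg :: "'a set \<Rightarrow> ('a \<Rightarrow> 'a \<Rightarrow> bool) \<Rightarrow> 'a \<Rightarrow> nat" where
  "deg S F x = card {y \<in> S. F x y}"

definition components_1_or_2_regular :: "'a set \<Rightarrow> ('a \<Rightarrow> 'a \<Rightarrow> bool) \<Rightarrow> bool" where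
  "components_1_or_2_regular S F \<longleftrightarrow>
     (\<forall>x\<in>S. (\<forall>y. F\<^sup>*\<^sup>* x y \<longrightarrow> deg S F y = 1) \<or> (\<forall>y. F\<^sup>*\<^sup>* x y \<longrightarrow> deg S F y = 2))"

definition two_factor :: "'a set \<Rightarrow> ('a \<Rightarrow> 'a \<Rightarrow> bool) \<Rightarrow> ('a \<Rightarrow> 'a \<Rightarrow> bool) \<Rightarrow> bool" where
  "two_factor S A F \<longleftrightarrow> spanning_subgraph S A F \<and> (\<forall>x\<in>S. deg S F x = 2)"

end

theory Submission
  imports Defs
begin

text \<open>Consecutive edges of a closed strict trail share an anchor, and so do its last and first
edge because the trail is closed; all of them are distinct. Hence the edge sequence of an Euler tour
is a Hamilton cycle of the intersection graph. For an Euler family, join the cyclically consecutive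
edges of each trail: since every edge lies in exactly one trail, a trail of length \<open>k\<close> becomes a
component of this subgraph that is a single edge if \<open>k = 2\<close> and a \<open>k\<close>-cycle if \<open>k \<ge> 3\<close>.\<close>

lemma eq_Suc_mod_iff:
  fixes i j k :: nat
  assumes "i < k" "j < k"
  shows "i = Suc j mod k \<longleftrightarrow> j = (if i = 0 then k - 1 else i - 1)"
  using assms by (cases "Suc j < k") (auto simp: mod_Suc)

lemma Suc_mod_eq_pred_iff:
  fixes i k :: nat
  assumes "i < k" "2 \<le> k"
  shows "Suc i mod k = (if i = 0 then k - 1 else i - 1) \<longleftrightarrow> k = 2"
  using assms by (cases "Suc i < k") (auto simp: mod_Suc)

lemma Suc_mod_neq:
  fixes i k :: nat
  assumes "i < k" "2 \<le> k"
  shows "Suc i mod k \<noteq> i"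
  using assms by (cases "Suc i = k") auto

lemma mod_less_bound:
  fixes i j k :: nat
  shows "i < k \<Longrightarrow> j mod k < k"
  by simp

definition cyclic_adj :: "'a list \<Rightarrow> 'a \<Rightarrow> 'a \<Rightarrow> bool" where
  "cyclic_adj xs x y \<longleftrightarrow> (\<exists>i<length xs.
     (x = xs ! i \<and> y = xs ! (Suc i mod length xs)) \<or> (y = xs ! i \<and> x = xs ! (Suc i mod length xs)))"

lemma cyclic_adj_commute: "cyclic_adj xs x y \<longleftrightarrow> cyclic_adj xs y x"
  unfolding cyclic_adj_def by blast

lemma cyclic_adj_in_set: "cyclic_adj xs x y \<Longrightarrow> x \<in> set xs \<and> y \<in> set xs"
  unfolding cyclic_adj_def by (metis mod_less_bound nth_mem)

lemma cyclic_adj_nth_iff: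
  assumes "distinct xs" "i < length xs" "j < length xs"
  shows "cyclic_adj xs (xs ! i) (xs ! j) \<longleftrightarrow>
    j = Suc i mod length xs \<or> i = Suc j mod length xs"
proof -
  have "xs ! a = xs ! b \<longleftrightarrow> a = b" if "a < length xs" "b < length xs" for a b
    using assms(1) that by (simp add: nth_eq_iff_index_eq)
  moreover have "Suc a mod length xs < length xs" for a
    using assms(2) by (rule mod_less_bound)
  ultimately show ?thesis
    unfolding cyclic_adj_def using assms(2,3) by metis
qed

lemma card_cyclic_adj:
  assumes "distinct xs" "length xs \<ge> 2" "x \<in> set xs"
  shows "card {y. cyclic_adj xs x y} = (if length xs = 2 then 1 else 2)"
proof -
  let ?k = "length xs"
  obtain i where i: "i < ?k" "x = xs ! i" using assms(3) by (auto simp: in_set_conv_nth)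
  define succ where "succ = Suc i mod ?k"
  define pred where "pred = (if i = 0 then ?k - 1 else i - 1)"
  have idx: "succ < ?k" "pred < ?k"
    using i(1) mod_less_bound[OF i(1)] unfolding succ_def pred_def by auto
  have "{y. cyclic_adj xs x y} = (\<lambda>j. xs ! j) ` {j. j < ?k \<and> cyclic_adj xs x (xs ! j)}"
    by (auto simp: image_iff) (metis cyclic_adj_in_set in_set_conv_nth)
  also have "{j. j < ?k \<and> cyclic_adj xs x (xs ! j)} = {succ, pred}"
    using cyclic_adj_nth_iff[OF assms(1) i(1)] eq_Suc_mod_iff[OF i(1)] idx i(2)
    unfolding succ_def pred_def by auto
  finally have "{y. cyclic_adj xs x y} = {xs ! succ, xs ! pred}"
    by simp
  moreover have "xs ! succ = xs ! pred \<longleftrightarrow> ?k = 2"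
    using Suc_mod_eq_pred_iff[OF i(1) assms(2)] assms(1) idx
    unfolding succ_def pred_def by (simp add: nth_eq_iff_index_eq)
  ultimately show ?thesis
    by auto
qed

lemma hamilton_cycle_of_cyclic_adj:
  assumes "distinct xs" "length xs \<ge> 3" "\<And>x y. cyclic_adj xs x y \<Longrightarrow> A x y"
  shows "hamilton_cycle (set xs) A xs"
  unfolding hamilton_cycle_def
proof (intro conjI allI impI)
  fix i assume "Suc i < length xs"
  then show "A (xs ! i) (xs ! Suc i)"
    using assms(3) unfolding cyclic_adj_def by (metis Suc_lessD mod_less)
next
  let ?l = "length xs - 1"
  have "?l < length xs" "Suc ?l = length xs"
    using assms(2) by linarith+
  then have "?l < length xs" "Suc ?l mod length xs = 0"
    by simp_all
  then have "A (xs ! ?l) (xs ! 0)" using assms(3) unfolding cyclic_adj_def by metis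
  moreover have "xs \<noteq> []" using assms(2) by auto
  ultimately show "A (last xs) (hd xs)" by (simp add: last_conv_nth hd_conv_nth)
qed (use assms in auto)

lemma closed_strict_trail_edges: "closed_strict_trail V E inc vs es \<Longrightarrow> set es \<subseteq> E"
  unfolding closed_strict_trail_def hwalk_def by (auto simp: in_set_conv_nth)

lemma closed_strict_trail_consecutive_adj:
  assumes "closed_strict_trail V E inc vs es" "i < length es"
  shows "inter_adj inc (es ! i) (es ! (Suc i mod length es))"
proof -
  let ?k = "length es"
  have w: "hwalk V E inc vs es" and k: "?k \<ge> 2" and closed: "hd vs = last vs"
    and d: "distinct es"
    using assms(1) unfolding closed_strict_trail_def by auto
  have lv: "length vs = Suc ?k" using w unfolding hwalk_def by simp
  have "vs ! Suc i = vs ! (Suc i mod ?k)"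
  proof (cases "Suc i < ?k")
    case False
    then have "Suc i = ?k" using assms(2) by simp
    then show ?thesis
      using closed lv by (metis hd_conv_nth last_conv_nth Zero_not_Suc diff_Suc_1 list.size(3) mod_self)
  qed simp
  moreover have "vs ! Suc i \<in> inc (es ! i)"
    using w assms(2) unfolding hwalk_def by blast
  moreover have "vs ! (Suc i mod ?k) \<in> inc (es ! (Suc i mod ?k))"
    using w mod_less_bound[OF assms(2)] unfolding hwalk_def by blast
  ultimately have "vs ! Suc i \<in> inc (es ! i) \<inter> inc (es ! (Suc i mod ?k))"
    by simp
  moreover have "es ! i \<noteq> es ! (Suc i mod ?k)"
    using d assms(2) mod_less_bound[OF assms(2)] Suc_mod_neq[OF assms(2) k]
    by (simp add: nth_eq_iff_index_eq)
  ultimately show ?thesis unfolding inter_adj_def by blast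
qed

lemma inter_adj_commute: "inter_adj inc e e' \<longleftrightarrow> inter_adj inc e' e"
  unfolding inter_adj_def by blast

lemma closed_strict_trail_cyclic_adj:
  assumes "closed_strict_trail V E inc vs es" "cyclic_adj es e e'"
  shows "inter_adj inc e e'"
proof -
  obtain i where "i < length es" and "{e, e'} = {es ! i, es ! (Suc i mod length es)}"
    using assms(2) unfolding cyclic_adj_def by blast
  then show ?thesis
    using closed_strict_trail_consecutive_adj[OF assms(1)] inter_adj_commute
    by (metis doubleton_eq_iff)
qed

lemma euler_family_unique_trail:
  assumes "euler_family V E inc Fam" "T \<in> Fam" "T' \<in> Fam"
    "e \<in> set (snd T)" "e \<in> set (snd T')"
  shows "T = T'"
proof -
  have "e \<in> E"
    using assms(1,2,4) closed_strict_trail_edges unfolding euler_family_def by blast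
  then have "\<exists>!U. U \<in> Fam \<and> e \<in> set (snd U)"
    using assms(1) unfolding euler_family_def by blast
  then show ?thesis
    using assms(2-5) by blast
qed

definition trail_graph :: "('v list \<times> 'e list) set \<Rightarrow> 'e \<Rightarrow> 'e \<Rightarrow> bool" where
  "trail_graph Fam x y \<longleftrightarrow> (\<exists>T\<in>Fam. cyclic_adj (snd T) x y)"

lemma euler_family_trail_graph_spanning:
  assumes "euler_family V E inc Fam"
  shows "spanning_subgraph E (inter_adj inc) (trail_graph Fam)"
  unfolding spanning_subgraph_def
proof (rule conjI; intro allI impI)
  fix x y assume "trail_graph Fam x y"
  then obtain T where "T \<in> Fam" and adj: "cyclic_adj (snd T) x y"
    unfolding trail_graph_def by blast
  then have trail: "closed_strict_trail V E inc (fst T) (snd T)"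
    using assms unfolding euler_family_def by blast
  have "x \<in> set (snd T)" "y \<in> set (snd T)"
    using cyclic_adj_in_set[OF adj] by auto
  then show "x \<in> E \<and> y \<in> E \<and> inter_adj inc x y"
    using closed_strict_trail_edges[OF trail] closed_strict_trail_cyclic_adj[OF trail adj] by blast
next
  fix x y assume "trail_graph Fam x y"
  then show "trail_graph Fam y x"
    unfolding trail_graph_def by (simp add: cyclic_adj_commute)
qed

lemma euler_family_trail_graph_iff:
  assumes "euler_family V E inc Fam" "T \<in> Fam" "x \<in> set (snd T)"
  shows "trail_graph Fam x y \<longleftrightarrow> cyclic_adj (snd T) x y"
proof
  assume "trail_graph Fam x y"
  then obtain T' where T': "T' \<in> Fam" "cyclic_adj (snd T') x y"
    unfolding trail_graph_def by blast
  have "x \<in> set (snd T')"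
    using cyclic_adj_in_set[OF T'(2)] by simp
  then have "T' = T"
    by (rule euler_family_unique_trail[OF assms(1) T'(1) assms(2) _ assms(3)])
  with T' show "cyclic_adj (snd T) x y" by simp
next
  assume "cyclic_adj (snd T) x y"
  then show "trail_graph Fam x y"
    unfolding trail_graph_def using assms(2) by blast
qed

lemma euler_family_trail_graph_reach:
  assumes "euler_family V E inc Fam" "T \<in> Fam" "(trail_graph Fam)\<^sup>*\<^sup>* x y" "x \<in> set (snd T)"
  shows "y \<in> set (snd T)"
  using assms(3,4)
proof induction
  case (step y z)
  then have adj: "cyclic_adj (snd T) y z"
    using euler_family_trail_graph_iff[OF assms(1,2)] by blast
  show ?case
    using cyclic_adj_in_set[OF adj] by simp
qed simp

lemma euler_family_trail_graph_deg:
  assumes "euler_family V E inc Fam" "T \<in> Fam" "x \<in> set (snd T)"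
  shows "deg E (trail_graph Fam) x = (if length (snd T) = 2 then 1 else 2)"
proof -
  have trail: "closed_strict_trail V E inc (fst T) (snd T)"
    using assms(1,2) unfolding euler_family_def by blast
  have "y \<in> E \<and> trail_graph Fam x y \<longleftrightarrow> cyclic_adj (snd T) x y" for y
    using euler_family_trail_graph_iff[OF assms, of y] cyclic_adj_in_set[of "snd T" x y]
      closed_strict_trail_edges[OF trail] by blast
  then have "{y \<in> E. trail_graph Fam x y} = {y. cyclic_adj (snd T) x y}"
    by simp
  moreover have "distinct (snd T)" "length (snd T) \<ge> 2"
    using trail unfolding closed_strict_trail_def by auto
  ultimately show ?thesis
    unfolding deg_def using assms(3) by (simp add: card_cyclic_adj)
qed

lemma euler_family_covers:
  assumes "euler_family V E inc Fam" "x \<in> E"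
  obtains T where "T \<in> Fam" "x \<in> set (snd T)"
  using assms unfolding euler_family_def by blast

theorem theorem2p12:
  fixes V :: "'v set" and E :: "'e set" and inc :: "'e \<Rightarrow> 'v set"
  assumes "hypergraph V E inc" and "card E \<ge> 3"
  shows "(eulerian V E inc \<longrightarrow> (\<exists>cs. hamilton_cycle E (inter_adj inc) cs))
    \<and> (quasi_eulerian V E inc \<longrightarrow>
        (\<exists>F. spanning_subgraph E (inter_adj inc) F \<and> components_1_or_2_regular E F))
    \<and> ((\<exists>Fam. euler_family V E inc Fam \<and> (\<forall>T\<in>Fam. length (snd T) \<ge> 3)) \<longrightarrow>
        (\<exists>F. two_factor E (inter_adj inc) F))"
proof (intro conjI impI)
  assume "eulerian V E inc"
  then obtain vs es where trail: "closed_strict_trail V E inc vs es" and edges: "set es = E"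
    unfolding eulerian_def euler_tour_def by blast
  have distinct: "distinct es"
    using trail unfolding closed_strict_trail_def by simp
  have long: "length es \<ge> 3"
    using distinct_card[OF distinct] edges assms(2) by simp
  have "hamilton_cycle (set es) (inter_adj inc) es"
    by (rule hamilton_cycle_of_cyclic_adj[where A = "inter_adj inc", OF distinct long])
      (rule closed_strict_trail_cyclic_adj[OF trail])
  then show "\<exists>cs. hamilton_cycle E (inter_adj inc) cs"
    unfolding edges by blast
next
  assume "quasi_eulerian V E inc"
  then obtain Fam where fam: "euler_family V E inc Fam" unfolding quasi_eulerian_def by blast
  have "components_1_or_2_regular E (trail_graph Fam)"
    unfolding components_1_or_2_regular_def
  proof
    fix x assume x: "x \<in> E"
    obtain T where T: "T \<in> Fam" "x \<in> set (snd T)"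
      using euler_family_covers[OF fam x] by blast
    define d :: nat where "d = (if length (snd T) = 2 then 1 else 2)"
    have "deg E (trail_graph Fam) y = d" if "(trail_graph Fam)\<^sup>*\<^sup>* x y" for y
      unfolding d_def
      using euler_family_trail_graph_deg[OF fam T(1) euler_family_trail_graph_reach[OF fam T(1) that T(2)]] .
    moreover have "d = 1 \<or> d = 2"
      unfolding d_def by simp
    ultimately show "(\<forall>y. (trail_graph Fam)\<^sup>*\<^sup>* x y \<longrightarrow> deg E (trail_graph Fam) y = 1) \<or>
               (\<forall>y. (trail_graph Fam)\<^sup>*\<^sup>* x y \<longrightarrow> deg E (trail_graph Fam) y = 2)"
      by blast
  qed
  then show "\<exists>F. spanning_subgraph E (inter_adj inc) F \<and> components_1_or_2_regular E F"
    using euler_family_trail_graph_spanning[OF fam] by blast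
next
  assume "\<exists>Fam. euler_family V E inc Fam \<and> (\<forall>T\<in>Fam. length (snd T) \<ge> 3)"
  then obtain Fam where fam: "euler_family V E inc Fam" and long: "\<forall>T\<in>Fam. length (snd T) \<ge> 3"
    by blast
  have "deg E (trail_graph Fam) x = 2" if x: "x \<in> E" for x
  proof -
    obtain T where T: "T \<in> Fam" "x \<in> set (snd T)"
      using euler_family_covers[OF fam x] by blast
    moreover have "length (snd T) \<noteq> 2"
      using long T(1) by fastforce
    ultimately show ?thesis
      using euler_family_trail_graph_deg[OF fam] by simp
  qed
  then show "\<exists>F. two_factor E (inter_adj inc) F"
    using euler_family_trail_graph_spanning[OF fam] unfolding two_factor_def by blast
qed

end
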